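(* Let $\Bbbk$ be a field, $R=\Bbbk[x_1,\dots,x_m]$ with the standard $\mathbb Z^m$-grading, and let $I\subseteq R$ be a monomial ideal with minimal monomial generating set $S=\{s_1,\dots,s_n\}$. Suppose that $R/I$ is of generic type. Then the algebraic Scarf complex $F_{\Delta}$ of $I$ is a minimal free multigraded resolution of $R/I$.
   Context: For $A\subseteq S$ let $m_A$ denote the least common multiple of the monomials in $A$ (with $m_\emptyset=1$), and identify monomials with their exponent vectors in $\mathbb Z^m$. The LCM-lattice $\Lambda$ is the set $\{m_A : \emptyset\ne A\subseteq S\}$. An element $\alpha\in\Lambda$ is called generic if the set $\{A\subseteq S : m_A=\alpha\}$ is a closed interval in the Boolean lattice of subsets of $S$, i.e. there are sets $I_\alpha\subseteq I^\alpha$ with $\{A : m_A=\alpha\}=\{A : I_\alpha\subseteq A\subseteq I^\alpha\}$. $R/I$ is of generic type if every element of $\Lambda$ is generic. The Scarf complex is $\Delta=\{A\subseteq S : m_B\neq m_A \text{ for all } B\subseteq S,\ B\ne A\}$ (a simplicial complex). Fix a total order on $S$. The algebraic Scarf complex $F_\Delta$ is the complex of free multigraded $R$-modules whose homological degree $i$ term has basis $\{e_A : A\in\Delta, |A|=i\}$ with $e_A$ of multidegree $m_A$, and differential $\partial(e_A)=\sum_{s\in A}\operatorname{sign}(s,A)\,\frac{m_A}{m_{A\setminus\{s\}}}\,e_{A\setminus\{s\}}$, where $\operatorname{sign}(s,A)=(-1)^{j+1}$ if $s$ is the $j$-th element of $A$; it is augmented to $R/I$ via $e_\emptyset\mapsto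 1$. *)

theory Defs
  imports "HOL-Library.Poly_Mapping"
begin

text \<open>Monomials in the variables of the finite type 'v are identified with their
exponent vectors, of type (v =>0 nat).  The polynomial ring
R = k[x_v : v in v] is the type of finitely supported maps from exponents to k
(finitely supported coefficient functions, convolution product).\<close>

type_synonym 'v expo = "'v \<Rightarrow>\<^sub>0 nat"
type_synonym ('v, 'k) mpoly = "'v expo \<Rightarrow>\<^sub>0 'k"

definition monom :: "'v expo \<Rightarrow> ('v, 'k::field) mpoly" where
  "monom a = Poly_Mapping.single a 1"

definition mlcm :: "'v expo set \<Rightarrow> 'v expo" where
  "mlcm A = Abs_poly_mapping (\<lambda>v. if A = {} then 0 else Max ((\<lambda>a. Poly_Mapping.lookup a v) ` A))"

definition mdvd :: "'v expo \<Rightarrow> 'v expo \<Rightarrow> bool" where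
  "mdvd a b \<longleftrightarrow> (\<forall>v. Poly_Mapping.lookup a v \<le> Poly_Mapping.lookup b v)"

definition minimal_mon_gens :: "'v expo set \<Rightarrow> bool" where
  "minimal_mon_gens S \<longleftrightarrow> finite S \<and> (\<forall>s\<in>S. \<forall>t\<in>S. mdvd s t \<longrightarrow> s = t)"

definition mon_ideal :: "'v expo set \<Rightarrow> ('v, 'k::field) mpoly set" where
  "mon_ideal S = {(\<Sum>s\<in>S. q s * monom s) | q. True}"

definition lcm_lattice :: "'v expo set \<Rightarrow> 'v expo set" where
  "lcm_lattice S = {mlcm A | A. A \<noteq> {} \<and> A \<subseteq> S}"

definition generic_elem :: "'v expo set \<Rightarrow> 'v expo \<Rightarrow> bool" where
  "generic_elem S \<alpha> \<longleftrightarrow>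
     (\<exists>Ilow Iup. {A. A \<subseteq> S \<and> mlcm A = \<alpha>} = {A. Ilow \<subseteq> A \<and> A \<subseteq> Iup})"

definition generic_type :: "'v expo set \<Rightarrow> bool" where
  "generic_type S \<longleftrightarrow> (\<forall>\<alpha>\<in>lcm_lattice S. generic_elem S \<alpha>)"

definition scarf :: "'v expo set \<Rightarrow> 'v expo set set" where
  "scarf S = {A. A \<subseteq> S \<and> (\<forall>B. B \<subseteq> S \<and> B \<noteq> A \<longrightarrow> mlcm B \<noteq> mlcm A)}"

text \<open>A total order on S is given by an injective ranking ord :: expo => nat.
 sign(s,A) = (-1)^(j+1) where s is the j-th element of A, i.e. (-1)^(number of
 elements of A preceding s).\<close>
definition sgn_in :: "('v expo \<Rightarrow> nat) \<Rightarrow> 'v expo \<Rightarrow> 'v expo set \<Rightarrow> 'k::field" where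
  "sgn_in ord s A = (-1) ^ card {t\<in>A. ord t < ord s}"

text \<open>Homological degree i term of the algebraic Scarf complex: the free R-module
 with basis e_A (A in the Scarf complex, |A| = i), represented by coefficient vectors.\<close>
definition scarf_mod :: "'v expo set \<Rightarrow> nat \<Rightarrow> ('v expo set \<Rightarrow> ('v, 'k::field) mpoly) set" where
  "scarf_mod S i = {f. \<forall>A. f A \<noteq> 0 \<longrightarrow> A \<in> scarf S \<and> card A = i}"

definition scarf_diff :: "'v expo set \<Rightarrow> ('v expo \<Rightarrow> nat) \<Rightarrow> nat
     \<Rightarrow> ('v expo set \<Rightarrow> ('v, 'k::field) mpoly) \<Rightarrow> ('v expo set \<Rightarrow> ('v, 'k) mpoly)" where
  "scarf_diff S ord i f = (\<lambda>B. \<Sum>A\<in>{A\<in>scarf S. card A = i}.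
      (\<Sum>s\<in>A. if B = A - {s}
               then Poly_Mapping.single 0 (sgn_in ord s A) * monom (mlcm A - mlcm (A - {s})) * f A
               else 0))"

text \<open>F_Delta (with augmentation e_{} |-> 1 to R/I) is a minimal free resolution of R/I:
 (1) e_{} exists (so the augmentation F_0 -> R/I is surjective) and the kernel of the
     augmentation equals the image of d_1;
 (2) exactness at F_i for all i >= 1;
 (3) minimality: the image of every differential lies in m F, m = (x_1,...,x_m),
     i.e. all coordinates of images have zero constant term.\<close>
definition scarf_is_min_resolution :: "'k::field itself \<Rightarrow> 'v expo set \<Rightarrow> ('v expo \<Rightarrow> nat) \<Rightarrow> bool" where
  "scarf_is_min_resolution _ S ord \<longleftrightarrow>
     {} \<in> scarf S
   \<and> {f \<in> scarf_mod S 0. f {} \<in> (mon_ideal S :: ('v, 'k) mpoly set)}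
       = scarf_diff S ord 1 ` (scarf_mod S 1 :: ('v expo set \<Rightarrow> ('v, 'k) mpoly) set)
   \<and> (\<forall>i\<ge>1. {f \<in> (scarf_mod S i :: ('v expo set \<Rightarrow> ('v, 'k) mpoly) set). scarf_diff S ord i f = (\<lambda>_. 0)}
             = scarf_diff S ord (Suc i) ` scarf_mod S (Suc i))
   \<and> (\<forall>i. \<forall>f \<in> (scarf_mod S (Suc i) :: ('v expo set \<Rightarrow> ('v, 'k) mpoly) set).
          \<forall>B. Poly_Mapping.lookup (scarf_diff S ord (Suc i) f B) 0 = 0)"

end

theory Submission
  imports Defs "HOL-Library.Disjoint_Sets"
begin

text \<open>
  Taking the coefficient of \<open>x\<^sup>\<beta>\<close> in every component turns the multidegree-\<open>\<beta>\<close> part of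
  \<open>F\<^sub>\<Delta>\<close> into the (augmented, reindexed) simplicial chain complex over \<open>\<Bbbk>\<close> of the complex
  \<open>\<Delta>\<^sub>\<beta> = {A \<in> \<Delta>. m\<^sub>A | \<beta>}\<close>: the monomial factors of the differential only shift degrees.
  So exactness of \<open>F\<^sub>\<Delta>\<close> amounts to acyclicity of every \<open>\<Delta>\<^sub>\<beta>\<close>.
  The complex of all \<open>A \<subseteq> S\<close> with \<open>m\<^sub>A | \<beta>\<close> is a cone over any generator dividing \<open>\<beta>\<close>,
  hence acyclic.  It shrinks to \<open>\<Delta>\<^sub>\<beta>\<close> by removing the non-Scarf faces in order of decreasing
  degree of \<open>m\<^sub>A\<close>: by genericity each fibre \<open>{A. m\<^sub>A = \<alpha>}\<close>, \<open>\<alpha>\<close> not a Scarf lcm, is a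
  Boolean interval with at least two elements, so any \<open>t \<in> I\<^sup>\<alpha> - I\<^sub>\<alpha>\<close> matches its faces in pairs
  \<open>A \<leftrightarrow> A \<union> {t}\<close>, and cancelling matched pairs preserves exactness.
  Minimality holds because a Scarf face never has the same lcm as one of its facets.
\<close>

section \<open>Exponent vectors\<close>

lemma expo_eq_add_iff: "(g = a + q) \<longleftrightarrow> mdvd a g \<and> q = g - a"
  for a g q :: "'v expo"
  unfolding mdvd_def poly_mapping_eq_iff fun_eq_iff lookup_add lookup_minus
  by auto

lemma mdvd_trans: "mdvd a b \<Longrightarrow> mdvd b c \<Longrightarrow> mdvd a c"
  unfolding mdvd_def using order_trans by blast

lemma mdvd_antisym: "mdvd a b \<Longrightarrow> mdvd b a \<Longrightarrow> a = b"
  unfolding mdvd_def by (rule poly_mapping_eqI) (meson antisym)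

lemma mdvd_add_left: "mdvd a (b + a)"
  by (simp add: mdvd_def lookup_add)

lemma mdvd_zero_iff: "mdvd a 0 \<longleftrightarrow> a = 0"
  by (auto simp: mdvd_def poly_mapping_eq_iff fun_eq_iff)

lemma diff_add_mdvd: "mdvd a b \<Longrightarrow> (b - a) + a = b"
  unfolding mdvd_def by (intro poly_mapping_eqI) (simp add: lookup_add lookup_minus)

lemma diff_right_inj_mdvd: "mdvd a b \<Longrightarrow> mdvd a c \<Longrightarrow> b - a = c - a \<longleftrightarrow> b = c"
  by (metis diff_add_mdvd)

lemma diff_eq_0_iff_mdvd: "mdvd a b \<Longrightarrow> b - a = 0 \<longleftrightarrow> b = a"
  unfolding mdvd_def poly_mapping_eq_iff fun_eq_iff lookup_minus by (auto intro: antisym)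

lemma mdvd_diff_iff: "mdvd c a \<Longrightarrow> mdvd c b \<Longrightarrow> mdvd (a - c) (b - c) \<longleftrightarrow> mdvd a b"
  unfolding mdvd_def lookup_minus by (meson diff_le_mono le_diff_iff)

lemma diff_diff_mdvd: "mdvd c a \<Longrightarrow> mdvd a b \<Longrightarrow> (b - c) - (a - c) = b - a"
  unfolding mdvd_def by (intro poly_mapping_eqI) (simp add: lookup_minus)

lemma lookup_single_mult:
  fixes p :: "('v, 'k::field) mpoly"
  shows "Poly_Mapping.lookup (Poly_Mapping.single a c * p) g
    = (if mdvd a g then c * Poly_Mapping.lookup p (g - a) else 0)"
proof -
  have "Poly_Mapping.lookup (Poly_Mapping.single a c * p) g
      = (\<Sum>l. Poly_Mapping.lookup (Poly_Mapping.single a c) l * (\<Sum>q. Poly_Mapping.lookup p q when g = l + q))"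
    by (simp only: lookup_mult)
  also have "\<dots> = (\<Sum>l. (c * (\<Sum>q. Poly_Mapping.lookup p q when g = l + q)) when l = a)"
    by (rule Sum_any.cong) (auto simp: lookup_single when_def)
  also have "\<dots> = c * (\<Sum>q. Poly_Mapping.lookup p q when g = a + q)"
    by simp
  also have "(\<Sum>q. Poly_Mapping.lookup p q when g = a + q) = (if mdvd a g then Poly_Mapping.lookup p (g - a) else 0)"
  proof (cases "mdvd a g")
    case True
    have "(\<Sum>q. Poly_Mapping.lookup p q when g = a + q) = (\<Sum>q. Poly_Mapping.lookup p q when q = g - a)"
      by (rule Sum_any.cong) (simp add: expo_eq_add_iff True)
    then show ?thesis using True by simp
  qed (simp add: expo_eq_add_iff)
  finally show ?thesis by simp
qed

lemma lookup_mlcm: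
  "Poly_Mapping.lookup (mlcm A) v = (if A = {} then 0 else Max ((\<lambda>a. Poly_Mapping.lookup a v) ` A))"
  for A :: "('v::finite) expo set"
  unfolding mlcm_def by (subst lookup_Abs_poly_mapping) auto

lemma mlcm_empty [simp]: "mlcm {} = (0::('v::finite) expo)"
  by (rule poly_mapping_eqI) (simp add: lookup_mlcm)

lemma mlcm_singleton [simp]: "mlcm {s} = (s::('v::finite) expo)"
  by (rule poly_mapping_eqI) (simp add: lookup_mlcm)

lemma mlcm_mdvd_iff: "finite A \<Longrightarrow> mdvd (mlcm A) b \<longleftrightarrow> (\<forall>a\<in>A. mdvd a b)"
  for A :: "('v::finite) expo set"
  unfolding mdvd_def lookup_mlcm by (auto simp: Max_le_iff)

lemma mdvd_mlcm: "finite A \<Longrightarrow> a \<in> A \<Longrightarrow> mdvd a (mlcm A)"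
  for A :: "('v::finite) expo set"
  unfolding mdvd_def lookup_mlcm by auto

lemma mlcm_mono:
  fixes A B :: "('v::finite) expo set"
  assumes "finite B" "A \<subseteq> B"
  shows "mdvd (mlcm A) (mlcm B)"
  using assms finite_subset[OF assms(2,1)] by (auto simp: mlcm_mdvd_iff intro: mdvd_mlcm)

lemma mlcm_insert_mdvd: "finite A \<Longrightarrow> mdvd s (mlcm A) \<Longrightarrow> mlcm (insert s A) = mlcm A"
  for A :: "('v::finite) expo set"
  by (intro mdvd_antisym) (auto simp: mlcm_mdvd_iff intro: mdvd_mlcm mlcm_mono)

lemma mlcm_nonzero:
  fixes B :: "('v::finite) expo set"
  assumes "finite B" "B \<noteq> {}" "0 \<notin> B"
  shows "mlcm B \<noteq> 0"
proof
  assume "mlcm B = 0"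
  moreover obtain s where "s \<in> B" using assms by blast
  ultimately have "mdvd s 0" using mdvd_mlcm[OF assms(1)] by fastforce
  with \<open>s \<in> B\<close> assms(3) show False by (simp add: mdvd_zero_iff)
qed

definition mdeg :: "('v::finite) expo \<Rightarrow> nat" where
  "mdeg a = (\<Sum>v\<in>UNIV. Poly_Mapping.lookup a v)"

lemma mdeg_mono: "mdvd a b \<Longrightarrow> mdeg a \<le> mdeg b"
  unfolding mdvd_def mdeg_def by (intro sum_mono) auto

lemma mdvd_mdeg_eq_imp_eq:
  assumes dvd: "mdvd a b" and deg: "mdeg a = mdeg b"
  shows "a = b"
proof (rule ccontr)
  assume "a \<noteq> b"
  then obtain v where "Poly_Mapping.lookup a v \<noteq> Poly_Mapping.lookup b v"
    by (metis poly_mapping_eqI)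
  with dvd have "Poly_Mapping.lookup a v < Poly_Mapping.lookup b v"
    unfolding mdvd_def using le_neq_implies_less by blast
  then have "mdeg a < mdeg b"
    unfolding mdeg_def by (intro sum_strict_mono_ex1) (use dvd in \<open>auto simp: mdvd_def\<close>)
  with deg show False by simp
qed

section \<open>The Scarf complex\<close>

lemma scarf_subset: "A \<in> scarf S \<Longrightarrow> A \<subseteq> S"
  by (simp add: scarf_def)

lemma scarf_mlcm_neq: "A \<in> scarf S \<Longrightarrow> B \<subseteq> S \<Longrightarrow> B \<noteq> A \<Longrightarrow> mlcm B \<noteq> mlcm A"
  by (simp add: scarf_def)

lemma mlcm_remove_eq_insert_iff:
  fixes A :: "('v::finite) expo set"
  assumes "finite A"
  shows "mlcm (A - {s}) = mlcm (insert s A) \<longleftrightarrow> mdvd s (mlcm (A - {s}))"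
proof
  assume "mlcm (A - {s}) = mlcm (insert s A)"
  then show "mdvd s (mlcm (A - {s}))" using assms by (simp add: mdvd_mlcm)
next
  assume "mdvd s (mlcm (A - {s}))"
  then show "mlcm (A - {s}) = mlcm (insert s A)"
    using mlcm_insert_mdvd[of "A - {s}" s] assms by simp
qed

lemma scarf_remove_insert_mlcm_neq:
  fixes S :: "('v::finite) expo set"
  assumes fin: "finite S" and A: "A \<in> scarf S" and s: "s \<in> S"
  shows "mlcm (A - {s}) \<noteq> mlcm (insert s A)"
proof
  assume eq: "mlcm (A - {s}) = mlcm (insert s A)"
  have AS: "A \<subseteq> S" using A by (rule scarf_subset)
  then have fin_ins: "finite (insert s A)" using fin finite_subset by blast
  have lo: "mdvd (mlcm (A - {s})) (mlcm A)" and hi: "mdvd (mlcm A) (mlcm (insert s A))"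
    using fin_ins by (auto intro!: mlcm_mono)
  have remove: "mlcm (A - {s}) = mlcm A"
    using mdvd_antisym[OF lo] hi eq by simp
  then have insert: "mlcm (insert s A) = mlcm A"
    using eq by simp
  show False
  proof (cases "s \<in> A")
    case True
    then have "A - {s} \<noteq> A" by blast
    then show False using scarf_mlcm_neq[OF A, of "A - {s}"] AS remove by blast
  next
    case False
    then have "insert s A \<noteq> A" by blast
    then show False using scarf_mlcm_neq[OF A, of "insert s A"] AS s insert by blast
  qed
qed

lemma non_scarf_remove_insert_mlcm_eq:
  fixes S :: "('v::finite) expo set"
  assumes fin: "finite S" and AS: "A \<subseteq> S" and nA: "A \<notin> scarf S"
  shows "\<exists>s\<in>S. mlcm (A - {s}) = mlcm (insert s A)"
proof -
  obtain A' where A': "A' \<subseteq> S" "A' \<noteq> A" "mlcm A' = mlcm A"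
    using AS nA by (auto simp: scarf_def)
  have finA: "finite A" and finA': "finite A'" using AS A'(1) fin finite_subset by blast+
  show ?thesis
  proof (cases "A' \<subseteq> A")
    case False
    then obtain s where s: "s \<in> A'" "s \<notin> A" by blast
    have "mdvd s (mlcm A)" using mdvd_mlcm[OF finA' s(1)] A'(3) by simp
    then have "mlcm (A - {s}) = mlcm (insert s A)" using s(2) finA by (simp add: mlcm_insert_mdvd)
    then show ?thesis using s A'(1) by blast
  next
    case True
    then obtain s where s: "s \<in> A" "s \<notin> A'" using A'(2) by blast
    have "A' \<subseteq> A - {s}" using True s by blast
    then have "mdvd (mlcm A) (mlcm (A - {s}))"
      using A'(3) finA by (metis finite_Diff mlcm_mono)
    then have "mdvd s (mlcm (A - {s}))" using mdvd_trans[OF mdvd_mlcm[OF finA s(1)]] by blast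
    then show ?thesis using s AS finA by (auto simp: mlcm_remove_eq_insert_iff)
  qed
qed

lemma scarf_downward_closed:
  fixes S :: "('v::finite) expo set"
  assumes fin: "finite S" and B: "B \<in> scarf S" and AB: "A \<subseteq> B"
  shows "A \<in> scarf S"
proof (rule ccontr)
  assume "A \<notin> scarf S"
  moreover have BS: "B \<subseteq> S" using B by (rule scarf_subset)
  ultimately obtain s where s: "s \<in> S" "mlcm (A - {s}) = mlcm (insert s A)"
    using non_scarf_remove_insert_mlcm_eq[OF fin] AB by blast
  have finB: "finite B" using BS fin finite_subset by blast
  have "mdvd s (mlcm (A - {s}))"
    using s(2) finite_subset[OF AB finB] by (simp add: mlcm_remove_eq_insert_iff)
  moreover have "mdvd (mlcm (A - {s})) (mlcm (B - {s}))"
    using AB finB by (intro mlcm_mono) auto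
  ultimately have "mdvd s (mlcm (B - {s}))"
    by (rule mdvd_trans)
  then have "mlcm (B - {s}) = mlcm (insert s B)"
    using finB by (simp add: mlcm_remove_eq_insert_iff)
  with scarf_remove_insert_mlcm_neq[OF fin B s(1)] show False by contradiction
qed

lemma empty_in_scarf:
  fixes S :: "('v::finite) expo set"
  assumes "finite S" "0 \<notin> S"
  shows "{} \<in> scarf S"
proof -
  have "mlcm B \<noteq> mlcm {}" if "B \<subseteq> S" "B \<noteq> {}" for B
    using that assms mlcm_nonzero[of B] finite_subset[of B S] by auto
  then show ?thesis unfolding scarf_def by blast
qed

lemma singleton_in_scarf:
  fixes S :: "('v::finite) expo set"
  assumes mg: "minimal_mon_gens S" and z: "0 \<notin> S" and s: "s \<in> S"
  shows "{s} \<in> scarf S"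
proof -
  have fin: "finite S" using mg by (simp add: minimal_mon_gens_def)
  have False if B: "B \<subseteq> S" "B \<noteq> {s}" "mlcm B = s" for B
  proof -
    have "finite B" using B fin finite_subset by blast
    then have "\<forall>b\<in>B. b = s"
      using B mdvd_mlcm mg s unfolding minimal_mon_gens_def by (metis subsetD)
    then have "B \<subseteq> {s}" by blast
    then have "B = {}" using B(2) by (simp add: subset_singleton_iff)
    then show False using B z s by simp
  qed
  then show ?thesis unfolding scarf_def using s by auto
qed

section \<open>The simplicial boundary with coefficients in a field\<close>

text \<open>\<open>chain_bd S ord g B\<close> is the coefficient of \<open>B\<close> in the boundary of \<open>\<Sum>\<^sub>A g A \<cdot> A\<close>.\<close>

definition chain_bd ::
    "'v expo set \<Rightarrow> ('v expo \<Rightarrow> nat) \<Rightarrow> ('v expo set \<Rightarrow> 'k::field) \<Rightarrow> 'v expo set \<Rightarrow> 'k" where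
  "chain_bd S ord g B =
     (if B \<subseteq> S then (\<Sum>s\<in>S - B. sgn_in ord s (insert s B) * g (insert s B)) else 0)"

lemma sgn_in_nonzero [simp]: "(sgn_in ord s A :: 'k::field) \<noteq> 0"
  by (simp add: sgn_in_def)

lemma sgn_in_swap_less:
  assumes fin: "finite A" and r: "r \<in> A" and s: "s \<in> A" and less: "ord s < ord r"
  shows "(sgn_in ord r (A - {s}) * sgn_in ord s A :: 'k::field)
       + sgn_in ord s (A - {r}) * sgn_in ord r A = 0"
proof -
  have "{t\<in>A. ord t < ord r} = insert s {t\<in>A - {s}. ord t < ord r}"
    using s less by auto
  then have "card {t\<in>A. ord t < ord r} = Suc (card {t\<in>A - {s}. ord t < ord r})"
    using fin by (simp add: card_insert_disjoint)
  then have "(sgn_in ord r A :: 'k) = - sgn_in ord r (A - {s})"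
    unfolding sgn_in_def by simp
  moreover have "{t\<in>A. ord t < ord s} = {t\<in>A - {r}. ord t < ord s}"
    using less by auto
  then have "(sgn_in ord s A :: 'k) = sgn_in ord s (A - {r})"
    unfolding sgn_in_def by simp
  ultimately show ?thesis by simp
qed

lemma sgn_in_swap:
  assumes "finite A" "r \<in> A" "s \<in> A" "ord s \<noteq> ord r"
  shows "(sgn_in ord r (A - {s}) * sgn_in ord s A :: 'k::field)
       + sgn_in ord s (A - {r}) * sgn_in ord r A = 0"
  using assms sgn_in_swap_less[OF assms(1-3), of ord] sgn_in_swap_less[OF assms(1,3,2), of ord]
  by (cases "ord s < ord r") (simp_all add: add.commute)

lemma chain_bd_chain_bd:
  fixes S :: "'v expo set" and g :: "'v expo set \<Rightarrow> 'k::field"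
  assumes fin: "finite S" and inj: "inj_on ord S"
  shows "chain_bd S ord (chain_bd S ord g) C = 0"
proof (cases "C \<subseteq> S")
  case CS: True
  define f where "f = (\<lambda>(r, s). sgn_in ord r (insert r C)
      * (sgn_in ord s (insert s (insert r C)) * g (insert s (insert r C))) :: 'k)"
  have "chain_bd S ord (chain_bd S ord g) C = (\<Sum>r\<in>S - C. \<Sum>s\<in>S - C - {r}. f (r, s))"
    unfolding chain_bd_def f_def using CS
    by (auto simp: sum_distrib_left intro!: sum.cong simp del: insert_Diff_single)
  also have "\<dots> = (\<Sum>x\<in>(SIGMA r:S - C. S - C - {r}). f x)"
    using fin by (subst sum.Sigma) auto
  also have "\<dots> = 0" \<comment> \<open>removing \<open>r\<close> then \<open>s\<close> and removing \<open>s\<close> then \<open>r\<close> give opposite signs\<close>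
  proof (rule sum_involution_eq_0[where h = "\<lambda>(r, s). (s, r)"])
    fix x assume "x \<in> (SIGMA r:S - C. S - C - {r})"
    then obtain r s where rs: "x = (r, s)" "r \<in> S - C" "s \<in> S - C" "s \<noteq> r" by auto
    define A where "A = insert s (insert r C)"
    have "finite A" unfolding A_def using CS fin finite_subset by blast
    moreover have "ord s \<noteq> ord r" using inj rs by (meson DiffD1 inj_on_contraD)
    ultimately have "(sgn_in ord r (A - {s}) * sgn_in ord s A :: 'k)
        + sgn_in ord s (A - {r}) * sgn_in ord r A = 0"
      by (intro sgn_in_swap) (auto simp: A_def)
    moreover have "A - {s} = insert r C" "A - {r} = insert s C" "insert r (insert s C) = A"
      using rs unfolding A_def by auto
    ultimately show "f ((\<lambda>(r, s). (s, r)) x) + f x = 0"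
      unfolding rs f_def by (simp add: A_def[symmetric] distrib_right[symmetric] mult.assoc[symmetric] add.commute)
  qed auto
  finally show ?thesis .
qed (simp add: chain_bd_def)

definition chains_on :: "'a set set \<Rightarrow> nat \<Rightarrow> ('a set \<Rightarrow> 'k::zero) set" where
  "chains_on K i = {g. \<forall>A. g A \<noteq> 0 \<longrightarrow> A \<in> K \<and> card A = i}"

definition bd_exact_at ::
    "'v expo set \<Rightarrow> ('v expo \<Rightarrow> nat) \<Rightarrow> 'v expo set set \<Rightarrow> nat \<Rightarrow> 'k::field itself \<Rightarrow> bool" where
  "bd_exact_at S ord K i _ \<longleftrightarrow> (\<forall>z \<in> (chains_on K i :: ('v expo set \<Rightarrow> 'k) set).
      chain_bd S ord z = (\<lambda>_. 0) \<longrightarrow> (\<exists>w\<in>chains_on K (Suc i). chain_bd S ord w = z))"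

lemma chains_onD: "g \<in> chains_on K i \<Longrightarrow> g A \<noteq> 0 \<Longrightarrow> A \<in> K \<and> card A = i"
  by (simp add: chains_on_def)

lemma zero_in_chains_on [simp]: "(\<lambda>_. 0) \<in> chains_on K i"
  by (simp add: chains_on_def)

lemma chains_on_diff:
  "f \<in> chains_on K i \<Longrightarrow> g \<in> chains_on K i \<Longrightarrow> (\<lambda>A. f A - g A :: 'k::ab_group_add) \<in> chains_on K i"
  by (auto simp: chains_on_def; metis diff_0_right diff_self)

lemma chains_on_add:
  "f \<in> chains_on K i \<Longrightarrow> g \<in> chains_on K i \<Longrightarrow> (\<lambda>A. f A + g A :: 'k::monoid_add) \<in> chains_on K i"
  by (auto simp: chains_on_def; metis add.right_neutral)

lemma chains_on_mono: "f \<in> chains_on K i \<Longrightarrow> K \<subseteq> L \<Longrightarrow> f \<in> chains_on L i"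
  unfolding chains_on_def by auto

lemma chain_bd_zero [simp]: "chain_bd S ord (\<lambda>_. 0::'k::field) = (\<lambda>_. 0)"
  by (simp add: chain_bd_def fun_eq_iff)

lemma chain_bd_diff: "chain_bd S ord (\<lambda>A. f A - g A) B = chain_bd S ord f B - (chain_bd S ord g B :: 'k::field)"
  by (simp add: chain_bd_def sum_subtractf right_diff_distrib)

lemma chain_bd_add: "chain_bd S ord (\<lambda>A. f A + g A) B = chain_bd S ord f B + (chain_bd S ord g B :: 'k::field)"
  by (simp add: chain_bd_def sum.distrib distrib_left)

lemma chain_bd_in_chains_on:
  fixes g :: "'v expo set \<Rightarrow> 'k::field"
  assumes fin: "finite S"
    and down: "\<And>A B. A \<in> K \<Longrightarrow> B \<subseteq> A \<Longrightarrow> B \<in> K"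
    and g: "g \<in> chains_on K (Suc i)"
  shows "chain_bd S ord g \<in> chains_on K i"
  unfolding chains_on_def mem_Collect_eq
proof (intro allI impI)
  fix B assume nz: "chain_bd S ord g B \<noteq> 0"
  then have BS: "B \<subseteq> S" by (auto simp: chain_bd_def split: if_splits)
  with nz obtain s where "s \<in> S - B" "sgn_in ord s (insert s B) * g (insert s B) \<noteq> 0"
    by (auto simp: chain_bd_def intro: sum.not_neutral_contains_not_neutral)
  moreover have "finite B" using BS fin finite_subset by blast
  ultimately show "B \<in> K \<and> card B = i"
    using chains_onD[OF g] down by fastforce
qed

lemma bd_exact_at_trivial:
  fixes K :: "'v expo set set"
  assumes "\<forall>A\<in>K. card A \<noteq> i"
  shows "bd_exact_at S ord K i TYPE('k::field)"
proof -
  have "z = (\<lambda>_. 0)" if "z \<in> (chains_on K i :: ('v expo set \<Rightarrow> 'k) set)" for z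
    using that assms by (fastforce simp: chains_on_def)
  then show ?thesis
    unfolding bd_exact_at_def by (metis chain_bd_zero zero_in_chains_on)
qed

text \<open>
  The faces of \<open>K - K'\<close> are matched in pairs \<open>A - {\<tau> A} \<leftrightarrow> A \<union> {\<tau> A}\<close>, and every coface in
  \<open>K\<close> of a face of \<open>K - K'\<close> again lies in \<open>K - K'\<close> and has the same pivot.  This is an acyclic
  matching in the sense of discrete Morse theory whose critical faces are those of \<open>K'\<close>, so
  \<open>K\<close> and \<open>K'\<close> have the same homology.
\<close>

locale pivot_collapse =
  fixes S :: "'v expo set" and ord :: "'v expo \<Rightarrow> nat" and K K' :: "'v expo set set"
    and \<tau> :: "'v expo set \<Rightarrow> 'v expo"
  assumes fin: "finite S" and inj: "inj_on ord S"
    and K_subset: "K \<subseteq> Pow S"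
    and K_down: "\<And>A B. A \<in> K \<Longrightarrow> B \<subseteq> A \<Longrightarrow> B \<in> K"
    and K'_subset: "K' \<subseteq> K"
    and pivot_insert: "\<And>A. A \<in> K - K' \<Longrightarrow> \<tau> A \<notin> A \<Longrightarrow> \<tau> A \<in> S \<and> insert (\<tau> A) A \<in> K"
    and pivot_remove: "\<And>A. A \<in> K - K' \<Longrightarrow> \<tau> A \<in> A
      \<Longrightarrow> A - {\<tau> A} \<in> K - K' \<and> \<tau> (A - {\<tau> A}) = \<tau> A"
    and pivot_coface: "\<And>C s. C \<in> K - K' \<Longrightarrow> s \<in> S - C \<Longrightarrow> insert s C \<in> K
               \<Longrightarrow> insert s C \<in> K - K' \<and> \<tau> (insert s C) = \<tau> C"
begin

definition pivot_free :: "('v expo set \<Rightarrow> 'k::zero) \<Rightarrow> bool" where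
  "pivot_free u \<longleftrightarrow> (\<forall>A\<in>K - K'. \<tau> A \<notin> A \<longrightarrow> u A = 0)"

lemma chain_bd_at_pivot_free_face:
  fixes u :: "'v expo set \<Rightarrow> 'k::field"
  assumes A: "A \<in> K - K'" "\<tau> A \<notin> A"
    and vanish: "\<And>s. s \<in> S - A - {\<tau> A} \<Longrightarrow> insert s A \<in> K - K' \<Longrightarrow> \<tau> (insert s A) \<notin> insert s A
      \<Longrightarrow> u (insert s A) = 0"
    and u: "\<And>B. u B \<noteq> 0 \<Longrightarrow> B \<in> K"
  shows "chain_bd S ord u A = sgn_in ord (\<tau> A) (insert (\<tau> A) A) * u (insert (\<tau> A) A)"
proof -
  let ?t = "\<tau> A"
  have AS: "A \<subseteq> S" and tS: "?t \<in> S - A" using A K_subset pivot_insert by auto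
  have "u (insert s A) = 0" if s: "s \<in> S - A - {?t}" for s
  proof (rule ccontr)
    assume nz: "u (insert s A) \<noteq> 0"
    then have "insert s A \<in> K - K'" "\<tau> (insert s A) = ?t"
      using pivot_coface[OF A(1), of s] s u by auto
    then show False using vanish[OF s] nz s A(2) by auto
  qed
  then show ?thesis
    unfolding chain_bd_def using AS tS fin by (simp add: sum.remove[of _ ?t])
qed

lemma pivot_correction:
  fixes u :: "'v expo set \<Rightarrow> 'k::field"
  assumes u: "u \<in> chains_on K i"
  shows "\<exists>c\<in>chains_on K (Suc i). (\<lambda>A. u A - chain_bd S ord c A) \<in> chains_on K i
           \<and> pivot_free (\<lambda>A. u A - chain_bd S ord c A)"
proof -
  define c where "c D = (if D \<in> K - K' \<and> \<tau> D \<in> D \<and> card D = Suc i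
      then u (D - {\<tau> D}) / sgn_in ord (\<tau> D) D else 0)" for D
  have c: "c \<in> chains_on K (Suc i)" unfolding chains_on_def c_def by auto
  have "u A - chain_bd S ord c A = 0" if A: "A \<in> K - K'" "\<tau> A \<notin> A" for A
  proof -
    let ?t = "\<tau> A"
    have finA: "finite A" using A K_subset fin finite_subset by blast
    have "chain_bd S ord c A = sgn_in ord ?t (insert ?t A) * c (insert ?t A)"
      by (rule chain_bd_at_pivot_free_face[OF A]) (auto simp: c_def split: if_splits)
    also have "\<dots> = u A"
    proof -
      have "insert ?t A \<in> K - K'" "\<tau> (insert ?t A) = ?t"
        using pivot_coface[OF A(1)] pivot_insert[OF A] A(2) by auto
      moreover have "card (insert ?t A) = Suc i \<longleftrightarrow> card A = i" "insert ?t A - {?t} = A"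
        using finA A(2) by auto
      ultimately show ?thesis using chains_onD[OF u, of A] by (auto simp: c_def)
    qed
    finally show ?thesis by simp
  qed
  moreover have "chain_bd S ord c \<in> chains_on K i"
    by (rule chain_bd_in_chains_on[OF fin _ c]) (blast intro: K_down)
  ultimately show ?thesis
    using c chains_on_diff[OF u] by (auto simp: pivot_free_def)
qed

lemma pivot_free_in_chains_on:
  fixes u :: "'v expo set \<Rightarrow> 'k::field"
  assumes u: "u \<in> chains_on K i" and free: "pivot_free u" and free_bd: "pivot_free (chain_bd S ord u)"
  shows "u \<in> chains_on K' i"
  unfolding chains_on_def mem_Collect_eq
proof (intro allI impI)
  fix A assume nz: "u A \<noteq> 0"
  then have AK: "A \<in> K" and cA: "card A = i" using chains_onD[OF u] by auto
  show "A \<in> K' \<and> card A = i"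
  proof (rule ccontr)
    assume "\<not> (A \<in> K' \<and> card A = i)"
    then have AK': "A \<in> K - K'" using AK cA by auto
    let ?t = "\<tau> A"
    have tA: "?t \<in> A" using free AK' nz by (auto simp: pivot_free_def)
    define C where "C = A - {?t}"
    have C: "C \<in> K - K'" "\<tau> C = ?t" "?t \<notin> C"
      using pivot_remove[OF AK' tA] unfolding C_def by auto
    have "chain_bd S ord u C = sgn_in ord ?t (insert ?t C) * u (insert ?t C)"
      by (rule chain_bd_at_pivot_free_face[of C, unfolded C(2)])
        (use C free chains_onD[OF u] in \<open>auto simp: pivot_free_def\<close>)
    moreover have "insert ?t C = A" unfolding C_def using tA by auto
    moreover have "chain_bd S ord u C = 0" using free_bd C by (auto simp: pivot_free_def)
    ultimately show False using nz by simp
  qed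
qed

lemma bd_exact_at_subcomplex:
  assumes ex: "bd_exact_at S ord K i TYPE('k::field)"
  shows "bd_exact_at S ord K' i TYPE('k)"
  unfolding bd_exact_at_def
proof (intro ballI impI)
  fix z :: "'v expo set \<Rightarrow> 'k" assume z: "z \<in> chains_on K' i" and dz: "chain_bd S ord z = (\<lambda>_. 0)"
  obtain w where w: "w \<in> chains_on K (Suc i)" "chain_bd S ord w = z"
    using ex chains_on_mono[OF z K'_subset] dz unfolding bd_exact_at_def by blast
  obtain c where c: "c \<in> chains_on K (Suc (Suc i))"
      "(\<lambda>A. w A - chain_bd S ord c A) \<in> chains_on K (Suc i)"
      "pivot_free (\<lambda>A. w A - chain_bd S ord c A)"
    using pivot_correction[OF w(1)] by blast
  have bd: "chain_bd S ord (\<lambda>A. w A - chain_bd S ord c A) = z"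
    using w(2) by (simp add: fun_eq_iff chain_bd_diff chain_bd_chain_bd[OF fin inj])
  have "pivot_free z" using z by (auto simp: pivot_free_def chains_on_def)
  then have "(\<lambda>A. w A - chain_bd S ord c A) \<in> chains_on K' (Suc i)"
    using pivot_free_in_chains_on[OF c(2,3)] bd by simp
  then show "\<exists>w\<in>chains_on K' (Suc i). chain_bd S ord w = z" using bd by blast
qed

lemma bd_exact_at_supcomplex:
  assumes ex: "bd_exact_at S ord K' i TYPE('k::field)"
  shows "bd_exact_at S ord K i TYPE('k)"
  unfolding bd_exact_at_def
proof (intro ballI impI)
  fix z :: "'v expo set \<Rightarrow> 'k" assume z: "z \<in> chains_on K i" and dz: "chain_bd S ord z = (\<lambda>_. 0)"
  obtain c where c: "c \<in> chains_on K (Suc i)"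
      "(\<lambda>A. z A - chain_bd S ord c A) \<in> chains_on K i"
      "pivot_free (\<lambda>A. z A - chain_bd S ord c A)"
    using pivot_correction[OF z] by blast
  have bd: "chain_bd S ord (\<lambda>A. z A - chain_bd S ord c A) = (\<lambda>_. 0)"
    using dz by (simp add: fun_eq_iff chain_bd_diff chain_bd_chain_bd[OF fin inj])
  then have "(\<lambda>A. z A - chain_bd S ord c A) \<in> chains_on K' i"
    using pivot_free_in_chains_on[OF c(2,3)] by (simp add: pivot_free_def)
  then obtain w where w: "w \<in> chains_on K' (Suc i)" "chain_bd S ord w = (\<lambda>A. z A - chain_bd S ord c A)"
    using ex bd unfolding bd_exact_at_def by blast
  have "(\<lambda>A. w A + c A) \<in> chains_on K (Suc i)"
    using chains_on_add[OF chains_on_mono[OF w(1) K'_subset] c(1)] .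
  moreover have "chain_bd S ord (\<lambda>A. w A + c A) = z"
    using w(2) by (simp add: fun_eq_iff chain_bd_add)
  ultimately show "\<exists>w\<in>chains_on K (Suc i). chain_bd S ord w = z" by blast
qed

lemma bd_exact_at_iff: "bd_exact_at S ord K i TYPE('k::field) \<longleftrightarrow> bd_exact_at S ord K' i TYPE('k)"
  using bd_exact_at_subcomplex bd_exact_at_supcomplex by blast

end

section \<open>Acyclicity of the lower Scarf complexes\<close>

definition faces_below :: "('v::finite) expo set \<Rightarrow> 'v expo \<Rightarrow> 'v expo set set" where
  "faces_below S \<beta> = {A. A \<subseteq> S \<and> mdvd (mlcm A) \<beta>}"

text \<open>
  Interpolates between \<open>faces_below S \<beta>\<close> (for \<open>n > mdeg \<beta>\<close>) and the Scarf faces in it (\<open>n = 0\<close>).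
\<close>

definition scarf_filtration :: "('v::finite) expo set \<Rightarrow> 'v expo \<Rightarrow> nat \<Rightarrow> 'v expo set set" where
  "scarf_filtration S \<beta> n = {A \<in> faces_below S \<beta>. A \<in> scarf S \<or> mdeg (mlcm A) < n}"

text \<open>
  When the fibre \<open>{B \<subseteq> S. m\<^sub>B = \<alpha>}\<close> is an interval \<open>[I\<^sub>\<alpha>, I\<^sup>\<alpha>]\<close>, its pivots are the
  elements of \<open>I\<^sup>\<alpha> - I\<^sub>\<alpha>\<close>.
\<close>

definition fibre_pivot :: "('v::finite) expo set \<Rightarrow> 'v expo \<Rightarrow> 'v expo \<Rightarrow> bool" where
  "fibre_pivot S \<alpha> t \<longleftrightarrow> t \<in> S \<and>
     (\<forall>B. B \<subseteq> S \<and> mlcm B = \<alpha> \<longrightarrow> mlcm (insert t B) = \<alpha> \<and> mlcm (B - {t}) = \<alpha>)"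

definition some_fibre_pivot :: "('v::finite) expo set \<Rightarrow> 'v expo \<Rightarrow> 'v expo" where
  "some_fibre_pivot S \<alpha> = (SOME t. fibre_pivot S \<alpha> t)"

lemma fibre_pivotD:
  assumes "fibre_pivot S \<alpha> t" "B \<subseteq> S" "mlcm B = \<alpha>"
  shows "t \<in> S" "mlcm (insert t B) = \<alpha>" "mlcm (B - {t}) = \<alpha>"
  using assms unfolding fibre_pivot_def by blast+

lemma generic_fibre_pivot:
  fixes S :: "('v::finite) expo set"
  assumes fin: "finite S" and z: "0 \<notin> S" and gen: "generic_type S"
    and AS: "A \<subseteq> S" and nA: "A \<notin> scarf S"
  shows "fibre_pivot S (mlcm A) (some_fibre_pivot S (mlcm A))"
proof -
  have "A \<noteq> {}" using empty_in_scarf[OF fin z] nA by auto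
  then have "mlcm A \<in> lcm_lattice S" using AS unfolding lcm_lattice_def by auto
  then have "generic_elem S (mlcm A)" using gen unfolding generic_type_def by blast
  then obtain L U where LU: "{B. B \<subseteq> S \<and> mlcm B = mlcm A} = {B. L \<subseteq> B \<and> B \<subseteq> U}"
    unfolding generic_elem_def by blast
  have fibre: "B \<subseteq> S \<and> mlcm B = mlcm A \<longleftrightarrow> L \<subseteq> B \<and> B \<subseteq> U" for B
    using LU by (simp add: set_eq_iff)
  obtain A' where A': "A' \<subseteq> S" "A' \<noteq> A" "mlcm A' = mlcm A"
    using AS nA by (auto simp: scarf_def)
  have "L \<subseteq> A" "A \<subseteq> U" "L \<subseteq> A'" "A' \<subseteq> U" using fibre[of A] fibre[of A'] AS A' by auto
  then obtain t where t: "t \<in> U" "t \<notin> L" using A'(2) by blast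
  have "U \<subseteq> S" using fibre[of U] \<open>L \<subseteq> A\<close> \<open>A \<subseteq> U\<close> by blast
  have "fibre_pivot S (mlcm A) t"
    unfolding fibre_pivot_def
  proof (intro conjI allI impI)
    show "t \<in> S" using t \<open>U \<subseteq> S\<close> by blast
    fix B assume "B \<subseteq> S \<and> mlcm B = mlcm A"
    then have "L \<subseteq> B" "B \<subseteq> U" using fibre by blast+
    then show "mlcm (insert t B) = mlcm A" "mlcm (B - {t}) = mlcm A"
      using fibre[of "insert t B"] fibre[of "B - {t}"] t by blast+
  qed
  then show ?thesis unfolding some_fibre_pivot_def by (rule someI)
qed

lemma faces_below_down_closed:
  fixes S :: "('v::finite) expo set"
  assumes "finite S" "A \<in> faces_below S \<beta>" "B \<subseteq> A"
  shows "B \<in> faces_below S \<beta>"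
  using assms mlcm_mono[of A B] finite_subset[of A S] mdvd_trans unfolding faces_below_def by blast

lemma faces_below_pivot_collapse:
  fixes S :: "('v::finite) expo set"
  assumes fin: "finite S" and inj: "inj_on ord S" and t: "t \<in> S" "mdvd t \<beta>"
  shows "pivot_collapse S ord (faces_below S \<beta>) {} (\<lambda>_. t)"
proof
  show "faces_below S \<beta> \<subseteq> Pow S" by (auto simp: faces_below_def)
  show down: "B \<in> faces_below S \<beta>" if "A \<in> faces_below S \<beta>" "B \<subseteq> A" for A B
    using faces_below_down_closed[OF fin that] .
  fix A assume A: "A \<in> faces_below S \<beta> - {}"
  then have "A \<subseteq> S" "mdvd (mlcm A) \<beta>" "finite A"
    using fin finite_subset by (auto simp: faces_below_def)
  then show "t \<in> S \<and> insert t A \<in> faces_below S \<beta>"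
    using t by (auto simp: faces_below_def mlcm_mdvd_iff)
  show "A - {t} \<in> faces_below S \<beta> - {} \<and> t = t"
    using down[of A "A - {t}"] A by blast
qed (use fin inj in auto)

text \<open>A cone with apex \<open>t\<close>: if no generator divides \<open>\<beta>\<close> only the empty face is left.\<close>

lemma faces_below_exact:
  fixes S :: "('v::finite) expo set"
  assumes fin: "finite S" and inj: "inj_on ord S" and i: "i \<ge> 1"
  shows "bd_exact_at S ord (faces_below S \<beta>) i TYPE('k::field)"
proof (cases "\<exists>t\<in>S. mdvd t \<beta>")
  case True
  then obtain t where "t \<in> S" "mdvd t \<beta>" by blast
  then have "bd_exact_at S ord (faces_below S \<beta>) i TYPE('k) \<longleftrightarrow> bd_exact_at S ord {} i TYPE('k)"
    by (rule pivot_collapse.bd_exact_at_iff[OF faces_below_pivot_collapse[OF fin inj]])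
  moreover have "bd_exact_at S ord {} i TYPE('k)"
    by (rule bd_exact_at_trivial) simp
  ultimately show ?thesis by (rule iffD2)
next
  case False
  have "A = {}" if "A \<in> faces_below S \<beta>" for A
  proof -
    have "A \<subseteq> S" "mdvd (mlcm A) \<beta>" using that by (auto simp: faces_below_def)
    moreover have "finite A" using calculation(1) fin finite_subset by blast
    ultimately show ?thesis using False by (auto simp: mlcm_mdvd_iff)
  qed
  then show ?thesis using i by (intro bd_exact_at_trivial) fastforce
qed

lemma scarf_filtration_top:
  fixes S :: "('v::finite) expo set"
  shows "scarf_filtration S \<beta> (Suc (mdeg \<beta>)) = faces_below S \<beta>"
  using mdeg_mono[of _ \<beta>] unfolding scarf_filtration_def faces_below_def by (auto simp: less_Suc_eq_le)

lemma scarf_filtration_bottom: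
  fixes S :: "('v::finite) expo set"
  shows "scarf_filtration S \<beta> 0 = {A \<in> scarf S. mdvd (mlcm A) \<beta>}"
  unfolding scarf_filtration_def faces_below_def using scarf_subset by auto

lemma scarf_filtration_Suc_diff:
  "A \<in> scarf_filtration S \<beta> (Suc n) - scarf_filtration S \<beta> n \<longleftrightarrow>
     A \<in> faces_below S \<beta> \<and> A \<notin> scarf S \<and> mdeg (mlcm A) = n"
  unfolding scarf_filtration_def by auto

lemma scarf_filtration_down_closed:
  fixes S :: "('v::finite) expo set"
  assumes fin: "finite S" and A: "A \<in> scarf_filtration S \<beta> n" and BA: "B \<subseteq> A"
  shows "B \<in> scarf_filtration S \<beta> n"
proof -
  have A_below: "A \<in> faces_below S \<beta>" using A by (simp add: scarf_filtration_def)
  then have "mdvd (mlcm B) (mlcm A)" using fin BA by (intro mlcm_mono) (auto simp: faces_below_def dest: finite_subset)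
  then have "mdeg (mlcm B) \<le> mdeg (mlcm A)" by (rule mdeg_mono)
  then have "B \<in> scarf S \<or> mdeg (mlcm B) < n"
    using A scarf_downward_closed[OF fin _ BA] unfolding scarf_filtration_def by auto
  then show ?thesis
    using faces_below_down_closed[OF fin A_below BA] by (simp add: scarf_filtration_def)
qed

lemma scarf_filtration_Suc_diff_insert:
  fixes S :: "('v::finite) expo set"
  assumes fin: "finite S" and C: "C \<in> scarf_filtration S \<beta> (Suc n) - scarf_filtration S \<beta> n"
    and s: "s \<in> S - C" and sC: "insert s C \<in> scarf_filtration S \<beta> (Suc n)"
  shows "insert s C \<in> scarf_filtration S \<beta> (Suc n) - scarf_filtration S \<beta> n \<and> mlcm (insert s C) = mlcm C"
proof -
  have C': "C \<subseteq> S" "mdvd (mlcm C) \<beta>" "C \<notin> scarf S" "mdeg (mlcm C) = n"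
    using C unfolding scarf_filtration_Suc_diff faces_below_def by auto
  have "insert s C \<notin> scarf S"
    using scarf_downward_closed[OF fin _ subset_insertI] C'(3) by blast
  then have "mdeg (mlcm (insert s C)) < Suc n"
    using sC unfolding scarf_filtration_def by auto
  moreover have dvd: "mdvd (mlcm C) (mlcm (insert s C))"
    using C'(1) fin finite_subset by (intro mlcm_mono) auto
  ultimately have "mlcm C = mlcm (insert s C)"
    using mdeg_mono[OF dvd] C'(4) by (intro mdvd_mdeg_eq_imp_eq[OF dvd]) simp
  then show ?thesis
    using C' s \<open>insert s C \<notin> scarf S\<close> unfolding scarf_filtration_Suc_diff faces_below_def by auto
qed

text \<open>
  The faces added in step \<open>n\<close> of the filtration are the non-Scarf faces whose lcm has degree
  \<open>n\<close>; they form whole fibres of \<open>A \<mapsto> m\<^sub>A\<close>, matched by the fibre pivots.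
\<close>

lemma scarf_filtration_pivot_collapse:
  fixes S :: "('v::finite) expo set"
  assumes fin: "finite S" and z: "0 \<notin> S" and inj: "inj_on ord S" and gen: "generic_type S"
  shows "pivot_collapse S ord (scarf_filtration S \<beta> (Suc n)) (scarf_filtration S \<beta> n) (\<lambda>A. some_fibre_pivot S (mlcm A))"
proof
  show "scarf_filtration S \<beta> (Suc n) \<subseteq> Pow S"
    by (auto simp: scarf_filtration_def faces_below_def)
  show "B \<in> scarf_filtration S \<beta> (Suc n)" if "A \<in> scarf_filtration S \<beta> (Suc n)" "B \<subseteq> A" for A B
    using scarf_filtration_down_closed[OF fin that] .
  show "scarf_filtration S \<beta> n \<subseteq> scarf_filtration S \<beta> (Suc n)"
    by (auto simp: scarf_filtration_def)
next
  fix A assume A: "A \<in> scarf_filtration S \<beta> (Suc n) - scarf_filtration S \<beta> n"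
  let ?t = "some_fibre_pivot S (mlcm A)"
  have A': "A \<subseteq> S" "mdvd (mlcm A) \<beta>" "A \<notin> scarf S" "mdeg (mlcm A) = n"
    using A unfolding scarf_filtration_Suc_diff faces_below_def by auto
  have t: "?t \<in> S" "mlcm (insert ?t A) = mlcm A" "mlcm (A - {?t}) = mlcm A"
    using fibre_pivotD[OF generic_fibre_pivot[OF fin z gen A'(1,3)] A'(1) refl] by auto
  show "?t \<in> S \<and> insert ?t A \<in> scarf_filtration S \<beta> (Suc n)"
    using t A' by (simp add: scarf_filtration_def faces_below_def)
  assume "?t \<in> A"
  then have "mlcm (A - {?t} - {?t}) = mlcm (insert ?t (A - {?t}))"
    using t(3) by (simp add: insert_absorb)
  then have "A - {?t} \<notin> scarf S"
    using scarf_remove_insert_mlcm_neq[OF fin _ t(1)] by blast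
  then show "A - {?t} \<in> scarf_filtration S \<beta> (Suc n) - scarf_filtration S \<beta> n
      \<and> some_fibre_pivot S (mlcm (A - {?t})) = ?t"
    using t A' unfolding scarf_filtration_Suc_diff by (auto simp: faces_below_def)
next
  fix C s
  assume "C \<in> scarf_filtration S \<beta> (Suc n) - scarf_filtration S \<beta> n" "s \<in> S - C"
    "insert s C \<in> scarf_filtration S \<beta> (Suc n)"
  then show "insert s C \<in> scarf_filtration S \<beta> (Suc n) - scarf_filtration S \<beta> n
      \<and> some_fibre_pivot S (mlcm (insert s C)) = some_fibre_pivot S (mlcm C)"
    using scarf_filtration_Suc_diff_insert[OF fin] by metis
qed (use fin inj in auto)

lemma scarf_below_exact:
  fixes S :: "('v::finite) expo set"
  assumes fin: "finite S" and z: "0 \<notin> S" and inj: "inj_on ord S" and gen: "generic_type S"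
    and i: "i \<ge> 1"
  shows "bd_exact_at S ord {A \<in> scarf S. mdvd (mlcm A) \<beta>} i TYPE('k::field)"
proof -
  have "bd_exact_at S ord (scarf_filtration S \<beta> n) i TYPE('k)" if "n \<le> Suc (mdeg \<beta>)" for n
    using that
  proof (induction rule: inc_induct)
    case base
    show ?case
      unfolding scarf_filtration_top by (rule faces_below_exact[OF fin inj i])
  next
    case (step n)
    then show ?case
      using pivot_collapse.bd_exact_at_iff[OF scarf_filtration_pivot_collapse[OF fin z inj gen]] by blast
  qed
  from this[of 0] show ?thesis
    by (simp add: scarf_filtration_bottom)
qed

section \<open>Multigraded strands of the algebraic Scarf complex\<close>

text \<open>
  \<open>strand f \<beta> A\<close> is the coefficient in \<open>f\<close> of the multidegree-\<open>\<beta>\<close> basis element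
  \<open>x^(\<beta> - m\<^sub>A) e\<^sub>A\<close>.
\<close>

definition strand :: "('v expo set \<Rightarrow> ('v, 'k::field) mpoly) \<Rightarrow> ('v::finite) expo \<Rightarrow> 'v expo set \<Rightarrow> 'k" where
  "strand f \<beta> A = (if mdvd (mlcm A) \<beta> then Poly_Mapping.lookup (f A) (\<beta> - mlcm A) else 0)"

lemma strand_eqI:
  fixes f g :: "('v::finite) expo set \<Rightarrow> ('v, 'k::field) mpoly"
  assumes "\<And>\<beta>. strand f \<beta> = strand g \<beta>"
  shows "f = g"
proof (intro ext poly_mapping_eqI)
  fix A \<gamma>
  have "strand f (\<gamma> + mlcm A) A = strand g (\<gamma> + mlcm A) A" by (simp add: assms)
  then show "Poly_Mapping.lookup (f A) \<gamma> = Poly_Mapping.lookup (g A) \<gamma>"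
    unfolding strand_def by (simp add: mdvd_add_left)
qed

lemma strand_zero [simp]: "strand (\<lambda>_. 0 :: ('v::finite, 'k::field) mpoly) \<beta> = (\<lambda>_. 0)"
  by (simp add: strand_def fun_eq_iff)

lemma strand_in_chains_on:
  fixes f :: "('v::finite) expo set \<Rightarrow> ('v, 'k::field) mpoly"
  assumes "f \<in> scarf_mod S i"
  shows "strand f \<beta> \<in> chains_on {A \<in> scarf S. mdvd (mlcm A) \<beta>} i"
  using assms unfolding chains_on_def scarf_mod_def strand_def by (force split: if_splits)

lemma sum_Pow_facets:
  fixes F :: "'a \<Rightarrow> 'a set \<Rightarrow> 'b::comm_monoid_add"
  assumes fin: "finite S"
  shows "(\<Sum>A\<in>Pow S. \<Sum>s\<in>A. if B = A - {s} then F s A else 0)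
       = (if B \<subseteq> S then (\<Sum>s\<in>S - B. F s (insert s B)) else 0)"
proof (cases "B \<subseteq> S")
  case True
  have "(\<Sum>A\<in>Pow S. \<Sum>s\<in>A. if B = A - {s} then F s A else 0)
      = (\<Sum>A\<in>Pow S. \<Sum>s\<in>S. if s \<in> A \<and> B = A - {s} then F s A else 0)"
    using fin by (intro sum.cong refl sum.mono_neutral_cong_left) auto
  also have "\<dots> = (\<Sum>s\<in>S. \<Sum>A\<in>Pow S. if s \<in> A \<and> B = A - {s} then F s A else 0)"
    by (rule sum.swap)
  also have "\<dots> = (\<Sum>s\<in>S. if s \<notin> B then F s (insert s B) else 0)"
  proof (intro sum.cong refl)
    fix s assume "s \<in> S"
    have "(\<Sum>A\<in>Pow S. if s \<in> A \<and> B = A - {s} then F s A else 0)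
        = (\<Sum>A\<in>Pow S. if A = insert s B then (if s \<notin> B then F s (insert s B) else 0) else 0)"
      by (intro sum.cong refl) auto
    then show "(\<Sum>A\<in>Pow S. if s \<in> A \<and> B = A - {s} then F s A else 0) = (if s \<notin> B then F s (insert s B) else 0)"
      using fin \<open>s \<in> S\<close> True by simp
  qed
  also have "\<dots> = (\<Sum>s\<in>S - B. F s (insert s B))"
    using fin by (intro sum.mono_neutral_cong_right) auto
  finally show ?thesis using True by simp
qed (auto intro!: sum.neutral)

lemma scarf_diff_eq:
  fixes S :: "('v::finite) expo set" and f :: "'v expo set \<Rightarrow> ('v, 'k::field) mpoly"
  assumes fin: "finite S" and f: "f \<in> scarf_mod S i"
  shows "scarf_diff S ord i f B = (if B \<subseteq> S then (\<Sum>s\<in>S - B.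
      Poly_Mapping.single (mlcm (insert s B) - mlcm B) (sgn_in ord s (insert s B)) * f (insert s B)) else 0)"
proof -
  let ?F = "\<lambda>s A. Poly_Mapping.single 0 (sgn_in ord s A) * monom (mlcm A - mlcm (A - {s})) * f A"
  have "scarf_diff S ord i f B = (\<Sum>A\<in>{A\<in>scarf S. card A = i}. \<Sum>s\<in>A. if B = A - {s} then ?F s A else 0)"
    unfolding scarf_diff_def by simp
  also have "\<dots> = (\<Sum>A\<in>Pow S. \<Sum>s\<in>A. if B = A - {s} then ?F s A else 0)"
  proof (intro sum.mono_neutral_left ballI)
    fix A assume "A \<in> Pow S - {A \<in> scarf S. card A = i}"
    then have "f A = 0" using f by (auto simp: scarf_mod_def)
    then show "(\<Sum>s\<in>A. if B = A - {s} then ?F s A else 0) = 0" by (simp add: sum.neutral)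
  qed (use fin scarf_subset in auto)
  also have "\<dots> = (if B \<subseteq> S then (\<Sum>s\<in>S - B. ?F s (insert s B)) else 0)"
    by (rule sum_Pow_facets[OF fin])
  also have "\<dots> = (if B \<subseteq> S then (\<Sum>s\<in>S - B.
      Poly_Mapping.single (mlcm (insert s B) - mlcm B) (sgn_in ord s (insert s B)) * f (insert s B)) else 0)"
    by (auto simp: monom_def mult_single intro!: sum.cong)
  finally show ?thesis .
qed

text \<open>The monomial factor \<open>m\<^sub>A / m\<^sub>A\<^sub>-\<^sub>s\<close> exactly compensates the shift of multidegrees.\<close>

lemma strand_scarf_diff:
  fixes S :: "('v::finite) expo set" and f :: "'v expo set \<Rightarrow> ('v, 'k::field) mpoly"
  assumes fin: "finite S" and f: "f \<in> scarf_mod S i"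
  shows "strand (scarf_diff S ord i f) \<beta> = chain_bd S ord (strand f \<beta>)"
proof
  fix B
  show "strand (scarf_diff S ord i f) \<beta> B = chain_bd S ord (strand f \<beta>) B"
  proof (cases "B \<subseteq> S")
    case True
    have finB: "finite B" using True fin finite_subset by blast
    have dvd: "mdvd (mlcm B) (mlcm (insert s B))" for s
      using finB by (intro mlcm_mono) auto
    show ?thesis
    proof (cases "mdvd (mlcm B) \<beta>")
      case True
      have shift: "Poly_Mapping.lookup (Poly_Mapping.single (mlcm (insert s B) - mlcm B) c * f (insert s B))
          (\<beta> - mlcm B) = c * strand f \<beta> (insert s B)" for s c
        unfolding lookup_single_mult strand_def mdvd_diff_iff[OF dvd True]
        by (simp add: diff_diff_mdvd[OF dvd])
      then show ?thesis
        unfolding scarf_diff_eq[OF fin f] strand_def[of _ _ B] chain_bd_def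
        using True \<open>B \<subseteq> S\<close> by (simp add: lookup_sum shift)
    next
      case False
      then have "strand f \<beta> (insert s B) = 0" for s
        using mdvd_trans[OF dvd] unfolding strand_def by auto
      then show ?thesis using False True by (simp add: strand_def chain_bd_def)
    qed
  qed (simp add: scarf_diff_eq[OF fin f] strand_def chain_bd_def)
qed

lemma scarf_diff_in_scarf_mod:
  fixes S :: "('v::finite) expo set" and f :: "'v expo set \<Rightarrow> ('v, 'k::field) mpoly"
  assumes fin: "finite S" and f: "f \<in> scarf_mod S (Suc i)"
  shows "scarf_diff S ord (Suc i) f \<in> scarf_mod S i"
  unfolding scarf_mod_def mem_Collect_eq
proof (intro allI impI)
  fix B assume nz: "scarf_diff S ord (Suc i) f B \<noteq> 0"
  then have BS: "B \<subseteq> S" unfolding scarf_diff_eq[OF fin f] by (auto split: if_splits)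
  with nz obtain s where "s \<in> S - B"
      "Poly_Mapping.single (mlcm (insert s B) - mlcm B) (sgn_in ord s (insert s B)) * f (insert s B) \<noteq> 0"
    unfolding scarf_diff_eq[OF fin f] by (meson sum.neutral)
  then have "s \<in> S - B" "f (insert s B) \<noteq> 0" by auto
  moreover have "finite B" using BS fin finite_subset by blast
  ultimately show "B \<in> scarf S \<and> card B = i"
    using f scarf_downward_closed[OF fin _ subset_insertI] unfolding scarf_mod_def by fastforce
qed

lemma scarf_diff_scarf_diff:
  fixes S :: "('v::finite) expo set" and f :: "'v expo set \<Rightarrow> ('v, 'k::field) mpoly"
  assumes fin: "finite S" and inj: "inj_on ord S" and f: "f \<in> scarf_mod S (Suc i)"
  shows "scarf_diff S ord i (scarf_diff S ord (Suc i) f) = (\<lambda>_. 0)"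
  by (rule strand_eqI)
    (simp add: strand_scarf_diff[OF fin] scarf_diff_in_scarf_mod[OF fin f] f fun_eq_iff
      chain_bd_chain_bd[OF fin inj])

lemma strand_support_finite:
  fixes S :: "('v::finite) expo set" and f :: "'v expo set \<Rightarrow> ('v, 'k::field) mpoly"
  assumes fin: "finite S" and f: "f \<in> scarf_mod S i"
  shows "finite {\<beta>. strand f \<beta> \<noteq> (\<lambda>_. 0)}"
proof (rule finite_subset)
  show "{\<beta>. strand f \<beta> \<noteq> (\<lambda>_. 0)} \<subseteq> (\<lambda>(A, \<gamma>). \<gamma> + mlcm A) ` (SIGMA A:Pow S. Poly_Mapping.keys (f A))"
  proof
    fix \<beta> assume "\<beta> \<in> {\<beta>. strand f \<beta> \<noteq> (\<lambda>_. 0)}"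
    then obtain A where "mdvd (mlcm A) \<beta>" and nz: "Poly_Mapping.lookup (f A) (\<beta> - mlcm A) \<noteq> 0"
      by (auto simp: strand_def fun_eq_iff split: if_splits)
    moreover from nz have "f A \<noteq> 0" by auto
    then have "A \<subseteq> S"
      using f scarf_subset by (auto simp: scarf_mod_def)
    ultimately show "\<beta> \<in> (\<lambda>(A, \<gamma>). \<gamma> + mlcm A) ` (SIGMA A:Pow S. Poly_Mapping.keys (f A))"
      by (auto simp: in_keys_iff diff_add_mdvd intro!: image_eqI[of _ _ "(A, \<beta> - mlcm A)"])
  qed
qed (use fin in auto)

lemma scarf_mod_of_strands:
  fixes S :: "('v::finite) expo set" and G :: "'v expo \<Rightarrow> 'v expo set \<Rightarrow> 'k::field"
  assumes M: "finite M"
    and G: "\<And>\<beta> A. G \<beta> A \<noteq> 0 \<Longrightarrow> A \<in> scarf S \<and> card A = i \<and> mdvd (mlcm A) \<beta>"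
  defines "w \<equiv> \<lambda>A. \<Sum>\<beta>\<in>M. Poly_Mapping.single (\<beta> - mlcm A) (G \<beta> A)"
  shows "w \<in> scarf_mod S i" and "strand w \<beta> = (if \<beta> \<in> M then G \<beta> else (\<lambda>_. 0))"
proof -
  show "w \<in> scarf_mod S i"
    unfolding scarf_mod_def mem_Collect_eq
  proof (intro allI impI)
    fix A assume "w A \<noteq> 0"
    then obtain \<beta> where "Poly_Mapping.single (\<beta> - mlcm A) (G \<beta> A) \<noteq> 0"
      unfolding w_def by (meson sum.neutral)
    then have "G \<beta> A \<noteq> 0" by auto
    then show "A \<in> scarf S \<and> card A = i" using G by blast
  qed
  show "strand w \<beta> = (if \<beta> \<in> M then G \<beta> else (\<lambda>_. 0))"
  proof
    fix A
    show "strand w \<beta> A = (if \<beta> \<in> M then G \<beta> else (\<lambda>_. 0)) A"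
    proof (cases "mdvd (mlcm A) \<beta>")
      case True
      have "Poly_Mapping.lookup (Poly_Mapping.single (\<beta>' - mlcm A) (G \<beta>' A)) (\<beta> - mlcm A)
          = (if \<beta>' = \<beta> then G \<beta>' A else 0)" for \<beta>'
        using G[of \<beta>' A] diff_right_inj_mdvd[OF _ True, of \<beta>'] by (auto simp: lookup_single when_def)
      then show ?thesis
        unfolding strand_def w_def using True M by (simp add: lookup_sum)
    next
      case False
      then show ?thesis using G[of \<beta> A] by (auto simp: strand_def)
    qed
  qed
qed

text \<open>
  A cycle of \<open>F\<^sub>\<Delta>\<close> is a boundary strand by strand, and the finitely many nonzero strands of the
  preimages assemble to a preimage.
\<close>

lemma scarf_cycle_is_boundary:
  fixes S :: "('v::finite) expo set" and z :: "'v expo set \<Rightarrow> ('v, 'k::field) mpoly"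
  assumes fin: "finite S" and z0: "0 \<notin> S" and inj: "inj_on ord S" and gen: "generic_type S"
    and i: "i \<ge> 1" and z: "z \<in> scarf_mod S i" and dz: "scarf_diff S ord i z = (\<lambda>_. 0)"
  shows "\<exists>w\<in>scarf_mod S (Suc i). scarf_diff S ord (Suc i) w = z"
proof -
  have "\<exists>g\<in>chains_on {A \<in> scarf S. mdvd (mlcm A) \<beta>} (Suc i). chain_bd S ord g = strand z \<beta>" for \<beta>
  proof -
    have "chain_bd S ord (strand z \<beta>) = (\<lambda>_. 0)"
      using strand_scarf_diff[OF fin z, of ord \<beta>] dz by simp
    then show ?thesis
      using scarf_below_exact[OF fin z0 inj gen i, of \<beta>, where 'k='k] strand_in_chains_on[OF z]
      unfolding bd_exact_at_def by blast
  qed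
  then obtain G where G: "\<And>\<beta>. G \<beta> \<in> chains_on {A \<in> scarf S. mdvd (mlcm A) \<beta>} (Suc i)"
      "\<And>\<beta>. chain_bd S ord (G \<beta>) = strand z \<beta>"
    by metis
  define M where "M = {\<beta>. strand z \<beta> \<noteq> (\<lambda>_. 0)}"
  have M: "finite M" unfolding M_def by (rule strand_support_finite[OF fin z])
  have G': "G \<beta> A \<noteq> 0 \<Longrightarrow> A \<in> scarf S \<and> card A = Suc i \<and> mdvd (mlcm A) \<beta>" for \<beta> A
    using chains_onD[OF G(1)] by blast
  define w where "w = (\<lambda>A. \<Sum>\<beta>\<in>M. Poly_Mapping.single (\<beta> - mlcm A) (G \<beta> A))"
  have w: "w \<in> scarf_mod S (Suc i)" and strand_w: "strand w \<beta> = (if \<beta> \<in> M then G \<beta> else (\<lambda>_. 0))" for \<beta>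
    using scarf_mod_of_strands[OF M G'] unfolding w_def by blast+
  have "scarf_diff S ord (Suc i) w = z"
  proof (rule strand_eqI)
    fix \<beta>
    show "strand (scarf_diff S ord (Suc i) w) \<beta> = strand z \<beta>"
      unfolding strand_scarf_diff[OF fin w] strand_w using G(2) by (simp add: M_def)
  qed
  with w show ?thesis by blast
qed

lemma scarf_ker_eq_image:
  fixes S :: "('v::finite) expo set"
  assumes fin: "finite S" and z0: "0 \<notin> S" and inj: "inj_on ord S" and gen: "generic_type S"
    and i: "i \<ge> 1"
  shows "{f \<in> (scarf_mod S i :: ('v expo set \<Rightarrow> ('v, 'k::field) mpoly) set). scarf_diff S ord i f = (\<lambda>_. 0)}
       = scarf_diff S ord (Suc i) ` scarf_mod S (Suc i)"
  using scarf_cycle_is_boundary[OF fin z0 inj gen i] scarf_diff_in_scarf_mod[OF fin]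
    scarf_diff_scarf_diff[OF fin inj]
  by blast

section \<open>Augmentation and minimality\<close>

lemma scarf_diff_1_empty:
  fixes S :: "('v::finite) expo set" and w :: "'v expo set \<Rightarrow> ('v, 'k::field) mpoly"
  assumes fin: "finite S" and w: "w \<in> scarf_mod S 1"
  shows "scarf_diff S ord 1 w {} = (\<Sum>s\<in>S. w {s} * monom s)"
proof -
  have "{t \<in> {s}. ord t < ord s} = {}" for s by auto
  then have "sgn_in ord s {s} = (1::'k)" for s
    unfolding sgn_in_def by (metis card.empty power_0)
  then show ?thesis
    unfolding scarf_diff_eq[OF fin w] by (simp add: monom_def mult.commute)
qed

lemma scarf_diff_1_nonempty:
  fixes S :: "('v::finite) expo set" and w :: "'v expo set \<Rightarrow> ('v, 'k::field) mpoly"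
  assumes fin: "finite S" and w: "w \<in> scarf_mod S 1" and B: "B \<noteq> {}"
  shows "scarf_diff S ord 1 w B = 0"
proof -
  have "w (insert s B) = 0" if "B \<subseteq> S" "s \<in> S - B" for s
  proof -
    have "finite B" using that fin finite_subset by blast
    then have "card (insert s B) \<noteq> 1" using that B by (simp add: card_insert_if)
    then show ?thesis using w unfolding scarf_mod_def by auto
  qed
  then show ?thesis unfolding scarf_diff_eq[OF fin w] by simp
qed

lemma scarf_mod_0_eq:
  fixes S :: "('v::finite) expo set" and f :: "'v expo set \<Rightarrow> ('v, 'k::field) mpoly"
  assumes fin: "finite S" and z0: "0 \<notin> S"
  shows "f \<in> scarf_mod S 0 \<longleftrightarrow> (\<forall>B. B \<noteq> {} \<longrightarrow> f B = 0)"
proof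
  show "\<forall>B. B \<noteq> {} \<longrightarrow> f B = 0" if "f \<in> scarf_mod S 0"
  proof (intro allI impI)
    fix B :: "'v expo set" assume "B \<noteq> {}"
    show "f B = 0"
    proof (rule ccontr)
      assume "f B \<noteq> 0"
      then have "B \<in> scarf S" "card B = 0" using that by (auto simp: scarf_mod_def)
      then show False using \<open>B \<noteq> {}\<close> fin scarf_subset finite_subset by (metis card_0_eq)
    qed
  qed
  show "f \<in> scarf_mod S 0" if "\<forall>B. B \<noteq> {} \<longrightarrow> f B = 0"
    unfolding scarf_mod_def mem_Collect_eq using that empty_in_scarf[OF fin z0] by (metis card.empty)
qed

lemma scarf_augmentation_exact:
  fixes S :: "('v::finite) expo set"
  assumes mg: "minimal_mon_gens S" and z0: "0 \<notin> S"
  shows "{f \<in> scarf_mod S 0. f {} \<in> (mon_ideal S :: ('v, 'k::field) mpoly set)}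
       = scarf_diff S ord 1 ` (scarf_mod S 1 :: ('v expo set \<Rightarrow> ('v, 'k) mpoly) set)"
proof -
  have fin: "finite S" using mg by (simp add: minimal_mon_gens_def)
  show ?thesis
  proof (intro equalityI subsetI)
    fix f :: "'v expo set \<Rightarrow> ('v, 'k) mpoly"
    assume "f \<in> {f \<in> scarf_mod S 0. f {} \<in> mon_ideal S}"
    then obtain q where f: "f \<in> scarf_mod S 0" and q: "f {} = (\<Sum>s\<in>S. q s * monom s)"
      unfolding mon_ideal_def by blast
    define w :: "'v expo set \<Rightarrow> ('v, 'k) mpoly"
      where "w A = (if A \<in> (\<lambda>s. {s}) ` S then q (the_elem A) else 0)" for A
    have w: "w \<in> scarf_mod S 1"
      using singleton_in_scarf[OF mg z0] by (auto simp: scarf_mod_def w_def)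
    have "scarf_diff S ord 1 w = f"
    proof
      fix B show "scarf_diff S ord 1 w B = f B"
        using scarf_diff_1_empty[OF fin w] scarf_diff_1_nonempty[OF fin w]
          f[unfolded scarf_mod_0_eq[OF fin z0]] q
        by (cases "B = {}") (simp_all add: w_def)
    qed
    then show "f \<in> scarf_diff S ord 1 ` scarf_mod S 1" using w by blast
  next
    fix f :: "'v expo set \<Rightarrow> ('v, 'k) mpoly"
    assume "f \<in> scarf_diff S ord 1 ` scarf_mod S 1"
    then obtain w where w: "w \<in> scarf_mod S 1" and fw: "f = scarf_diff S ord 1 w" by blast
    have "f \<in> scarf_mod S 0"
      unfolding scarf_mod_0_eq[OF fin z0] fw using scarf_diff_1_nonempty[OF fin w] by blast
    moreover have "f {} \<in> mon_ideal S"
      unfolding mon_ideal_def fw scarf_diff_1_empty[OF fin w]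
      by (intro CollectI exI[of _ "\<lambda>s. w {s}"]) simp
    ultimately show "f \<in> {f \<in> scarf_mod S 0. f {} \<in> mon_ideal S}" by blast
  qed
qed

lemma scarf_diff_constant_term:
  fixes S :: "('v::finite) expo set" and f :: "'v expo set \<Rightarrow> ('v, 'k::field) mpoly"
  assumes fin: "finite S" and f: "f \<in> scarf_mod S (Suc i)"
  shows "Poly_Mapping.lookup (scarf_diff S ord (Suc i) f B) 0 = 0"
proof -
  have "Poly_Mapping.lookup (Poly_Mapping.single (mlcm (insert s B) - mlcm B) c * f (insert s B)) 0 = 0"
    if "B \<subseteq> S" "s \<in> S - B" for s c
  proof (cases "f (insert s B) = 0")
    case False
    then have "insert s B \<in> scarf S" using f by (auto simp: scarf_mod_def)
    then have "mlcm (insert s B - {s}) \<noteq> mlcm (insert s (insert s B))"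
      using scarf_remove_insert_mlcm_neq[OF fin _ ] that by blast
    moreover have "mdvd (mlcm B) (mlcm (insert s B))"
      using that fin finite_subset by (intro mlcm_mono) auto
    ultimately have "mlcm (insert s B) - mlcm B \<noteq> 0"
      using that by (simp add: diff_eq_0_iff_mdvd)
    then show ?thesis by (simp add: lookup_single_mult mdvd_zero_iff)
  qed simp
  then show ?thesis unfolding scarf_diff_eq[OF fin f] by (simp add: lookup_sum)
qed

theorem corollary2p6:
  fixes S :: "('v::finite) expo set"
    and ord :: "'v expo \<Rightarrow> nat"
  assumes "minimal_mon_gens S"
    and "0 \<notin> S"
    and "inj_on ord S"
    and "generic_type S"
  shows "scarf_is_min_resolution TYPE('k::field) S ord"
proof -
  have fin: "finite S" using assms(1) by (simp add: minimal_mon_gens_def)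
  show ?thesis
    unfolding scarf_is_min_resolution_def
    using scarf_augmentation_exact[OF assms(1,2)]
    by (simp add: empty_in_scarf[OF fin assms(2)] scarf_ker_eq_image[OF fin assms(2-4)]
        scarf_diff_constant_term[OF fin])
qed

end
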